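(* Let $X$ be a regular CW complex. Then for each $n\ge0$ the canonical map $\hat h_n:\coprod_{j\in J_n}\mathbb{D}^{n,m_n(j)}\to X^{(n)}$ is an induction onto a $D$-open subset of $X^{(n)}$.
   Context: An induction is an injective smooth map that is a diffeomorphism onto its image with the subset diffeology. $D$-topology: $O\subset Y$ is open iff $P^{-1}(O)$ is open for every plot $P$. Let $\ell(t)=0$ for $t\le0$, $e^{-1/t}$ for $t>0$; $\alpha_0=\int_0^1\ell(3x)\ell(3-3x)dx$; $\lambda(t)=\frac1{\alpha_0}\int_0^t\ell(3x)\ell(3-3x)dx$; $\phi(t)=\int_0^{1/2+t}\lambda(x)dx$. For integers $n,m\ge0$: $\mathbb{D}^{n,m}=\{(u,v)\in\mathbb{R}^n\times\mathbb{R}^m:\|u\|\ge1-\phi(2-\|u\|-\|v\|)\}$, $\mathbb{S}^{n-1,m}=\{(u,v):\|u\|\ge1\}$ (empty for $n=0$), with subset diffeologies. A fat CW complex is a diffeological space $X$ with subspaces $\emptyset=X^{(-1)}\subset X^{(0)}\subset\cdots$, index sets $J_n$, maps $m_n:J_n\to\mathbb{N}_0$ and smooth maps $h_n:\coprod_{j\in J_n}\mathbb{S}^{n-1,m_n(j)}\to X^{(n-1)}$ such that each $X^{(n)}$ is the pushout in diffeological spaces of the inclusion $i_n:\coprod_j\mathbb{S}^{n-1,m_n(j)}\hookrightarrow\coprod_j\mathbb{D}^{n,m_n(j)}$ and $h_n$ (with induced map $\hat h_n:\coprod_j\mathbb{D}^{n,m_n(j)}\to X^{(n)}$), and $X$ is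 the diffeological colimit of the $X^{(n)}$. It is regular (a regular CW complex) if every $h_n$ is an induction whose image is $D$-open in $X^{(n-1)}$. *)

theory Defs
  imports "HOL-Analysis.Analysis"
begin

text \<open>R^n is represented as the functions nat => real vanishing from index n on.\<close>

definition Esp :: "nat \<Rightarrow> (nat \<Rightarrow> real) set" where
  "Esp n = {x. \<forall>i\<ge>n. x i = 0}"

definition Enorm :: "nat \<Rightarrow> (nat \<Rightarrow> real) \<Rightarrow> real" where
  "Enorm n x = sqrt (\<Sum>i<n. (x i)\<^sup>2)"

definition Edist :: "nat \<Rightarrow> (nat \<Rightarrow> real) \<Rightarrow> (nat \<Rightarrow> real) \<Rightarrow> real" where
  "Edist n x y = Enorm n (\<lambda>i. x i - y i)"

definition Eopen :: "nat \<Rightarrow> (nat \<Rightarrow> real) set \<Rightarrow> bool" where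
  "Eopen n U \<longleftrightarrow> U \<subseteq> Esp n \<and>
     (\<forall>x\<in>U. \<exists>e>0. \<forall>y\<in>Esp n. Edist n x y < e \<longrightarrow> y \<in> U)"

definition Econt :: "nat \<Rightarrow> (nat \<Rightarrow> real) set \<Rightarrow> ((nat \<Rightarrow> real) \<Rightarrow> real) \<Rightarrow> bool" where
  "Econt n U g \<longleftrightarrow>
     (\<forall>x\<in>U. \<forall>e>0. \<exists>d>0. \<forall>y\<in>U. Edist n x y < d \<longrightarrow> \<bar>g y - g x\<bar> < e)"

inductive_set Epartials :: "nat \<Rightarrow> (nat \<Rightarrow> real) set \<Rightarrow> ((nat \<Rightarrow> real) \<Rightarrow> real)
    \<Rightarrow> ((nat \<Rightarrow> real) \<Rightarrow> real) set"
  for n U g where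
  base: "g \<in> Epartials n U g"
| step: "h \<in> Epartials n U g \<Longrightarrow> i < n \<Longrightarrow>
         (\<forall>x\<in>U. ((\<lambda>t. h (x(i := x i + t))) has_real_derivative h' x) (at 0)) \<Longrightarrow>
         h' \<in> Epartials n U g"

definition Esmooth :: "nat \<Rightarrow> (nat \<Rightarrow> real) set \<Rightarrow> ((nat \<Rightarrow> real) \<Rightarrow> real) \<Rightarrow> bool" where
  "Esmooth n U g \<longleftrightarrow>
     (\<forall>h\<in>Epartials n U g. Econt n U h \<and>
        (\<forall>i<n. \<forall>x\<in>U. \<exists>d. ((\<lambda>t. h (x(i := x i + t))) has_real_derivative d) (at 0)))"

definition Esmooth_map :: "nat \<Rightarrow> (nat \<Rightarrow> real) set \<Rightarrow> nat
    \<Rightarrow> ((nat \<Rightarrow> real) \<Rightarrow> (nat \<Rightarrow> real)) \<Rightarrow> bool" where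
  "Esmooth_map l U k F \<longleftrightarrow> (\<forall>x\<in>U. F x \<in> Esp k) \<and> (\<forall>i<k. Esmooth l U (\<lambda>x. F x i))"

text \<open>A parametrization (k, U, P): U open in R^k, P : U -> X (stored extensionally).\<close>
type_synonym 'a param = "nat \<times> (nat \<Rightarrow> real) set \<times> ((nat \<Rightarrow> real) \<Rightarrow> 'a)"
type_synonym 'a dspace = "'a set \<times> 'a param set"

abbreviation carrier :: "'a dspace \<Rightarrow> 'a set" where "carrier S \<equiv> fst S"

definition plot :: "'a dspace \<Rightarrow> nat \<Rightarrow> (nat \<Rightarrow> real) set \<Rightarrow> ((nat \<Rightarrow> real) \<Rightarrow> 'a) \<Rightarrow> bool" where
  "plot S k U P \<longleftrightarrow> (k, U, restrict P U) \<in> snd S"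

definition diffeology :: "'a dspace \<Rightarrow> bool" where
  "diffeology S \<longleftrightarrow>
     (\<forall>(k, U, P)\<in>snd S. Eopen k U \<and> P \<in> U \<rightarrow>\<^sub>E carrier S)
   \<and> (\<forall>k U x. Eopen k U \<and> x \<in> carrier S \<longrightarrow> plot S k U (\<lambda>_. x))
   \<and> (\<forall>k U P. Eopen k U \<and> P ` U \<subseteq> carrier S \<and>
        (\<forall>r\<in>U. \<exists>V. Eopen k V \<and> r \<in> V \<and> V \<subseteq> U \<and> plot S k V P) \<longrightarrow> plot S k U P)
   \<and> (\<forall>k U P l V F. plot S k U P \<and> Eopen l V \<and> Esmooth_map l V k F \<and> F ` V \<subseteq> U
        \<longrightarrow> plot S l V (P \<circ> F))"

definition smooth :: "'a dspace \<Rightarrow> 'b dspace \<Rightarrow> ('a \<Rightarrow> 'b) \<Rightarrow> bool" where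
  "smooth S T f \<longleftrightarrow> f \<in> carrier S \<rightarrow> carrier T \<and>
     (\<forall>k U P. plot S k U P \<longrightarrow> plot T k U (f \<circ> P))"

definition subspace :: "'a dspace \<Rightarrow> 'a set \<Rightarrow> 'a dspace" where
  "subspace T A = (A, {(k, U, P) \<in> snd T. P ` U \<subseteq> A})"

definition diffeomorphism :: "'a dspace \<Rightarrow> 'b dspace \<Rightarrow> ('a \<Rightarrow> 'b) \<Rightarrow> bool" where
  "diffeomorphism S T f \<longleftrightarrow> bij_betw f (carrier S) (carrier T) \<and> smooth S T f
     \<and> smooth T S (inv_into (carrier S) f)"

definition induction :: "'a dspace \<Rightarrow> 'b dspace \<Rightarrow> ('a \<Rightarrow> 'b) \<Rightarrow> bool" where
  "induction S T f \<longleftrightarrow> inj_on f (carrier S) \<and> smooth S T f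
     \<and> diffeomorphism S (subspace T (f ` carrier S)) f"

definition D_open :: "'a dspace \<Rightarrow> 'a set \<Rightarrow> bool" where
  "D_open S W \<longleftrightarrow> W \<subseteq> carrier S \<and>
     (\<forall>k U P. plot S k U P \<longrightarrow> Eopen k {x \<in> U. P x \<in> W})"

definition empty_dspace :: "'a dspace" where
  "empty_dspace = ({}, {(k, {}, \<lambda>_. undefined) | k. True})"

definition RR :: "nat \<Rightarrow> nat \<Rightarrow> ((nat \<Rightarrow> real) \<times> (nat \<Rightarrow> real)) dspace" where
  "RR n m = (Esp n \<times> Esp m,
     {(k, U, P). Eopen k U \<and> P \<in> U \<rightarrow>\<^sub>E Esp n \<times> Esp m \<and>
        Esmooth_map k U n (fst \<circ> P) \<and> Esmooth_map k U m (snd \<circ> P)})"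

definition dsum :: "'j set \<Rightarrow> ('j \<Rightarrow> 'b dspace) \<Rightarrow> ('j \<times> 'b) dspace" where
  "dsum J S = (Sigma J (\<lambda>j. carrier (S j)),
     {(k, U, P). Eopen k U \<and> P \<in> U \<rightarrow>\<^sub>E Sigma J (\<lambda>j. carrier (S j)) \<and>
        (\<forall>r\<in>U. \<exists>V j Q. Eopen k V \<and> r \<in> V \<and> V \<subseteq> U \<and> j \<in> J \<and> plot (S j) k V Q \<and>
            (\<forall>x\<in>V. P x = (j, Q x)))})"

definition ell :: "real \<Rightarrow> real" where
  "ell t = (if t \<le> 0 then 0 else exp (- 1 / t))"

definition oint :: "(real \<Rightarrow> real) \<Rightarrow> real \<Rightarrow> real" where
  "oint f t = (if 0 \<le> t then integral {0..t} f else - integral {t..0} f)"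

definition alpha0 :: real where
  "alpha0 = integral {0..1} (\<lambda>x. ell (3 * x) * ell (3 - 3 * x))"

definition lam :: "real \<Rightarrow> real" where
  "lam t = oint (\<lambda>x. ell (3 * x) * ell (3 - 3 * x)) t / alpha0"

definition phi :: "real \<Rightarrow> real" where
  "phi t = oint lam (1 / 2 + t)"

text \<open>D^{n,m} and S^{n-1,m} (the latter is written fat_sphere n m) with subset diffeologies.\<close>
definition fat_disk :: "nat \<Rightarrow> nat \<Rightarrow> ((nat \<Rightarrow> real) \<times> (nat \<Rightarrow> real)) dspace" where
  "fat_disk n m = subspace (RR n m)
     {(u, v) \<in> Esp n \<times> Esp m. Enorm n u \<ge> 1 - phi (2 - Enorm n u - Enorm m v)}"

definition fat_sphere :: "nat \<Rightarrow> nat \<Rightarrow> ((nat \<Rightarrow> real) \<times> (nat \<Rightarrow> real)) dspace" where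
  "fat_sphere n m = subspace (RR n m) {(u, v) \<in> Esp n \<times> Esp m. Enorm n u \<ge> 1}"

text \<open>P is the pushout (in diffeological spaces) of the inclusion carrier A into carrier C
  and h : A -> B, with legs the inclusion B into P and hh : C -> P.
  This is the standard construction: quotient of the sum B + C with quotient diffeology.\<close>
definition is_pushout :: "'c dspace \<Rightarrow> 'a dspace \<Rightarrow> 'c dspace \<Rightarrow> 'a dspace
    \<Rightarrow> ('c \<Rightarrow> 'a) \<Rightarrow> ('c \<Rightarrow> 'a) \<Rightarrow> bool" where
  "is_pushout A B C P h hh \<longleftrightarrow>
     carrier A \<subseteq> carrier C \<and> carrier B \<subseteq> carrier P \<and>
     hh \<in> carrier C \<rightarrow> carrier P \<and>
     (\<forall>a\<in>carrier A. hh a = h a) \<and>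
     carrier P = carrier B \<union> hh ` carrier C \<and>
     (\<forall>c\<in>carrier C - carrier A. \<forall>c'\<in>carrier C. hh c = hh c' \<longrightarrow> c = c') \<and>
     (\<forall>c\<in>carrier C - carrier A. hh c \<notin> carrier B) \<and>
     snd P = {(k, U, Q). Eopen k U \<and> Q \<in> U \<rightarrow>\<^sub>E carrier P \<and>
        (\<forall>r\<in>U. \<exists>V. Eopen k V \<and> r \<in> V \<and> V \<subseteq> U \<and>
           ((\<exists>Q'. plot B k V Q' \<and> (\<forall>x\<in>V. Q x = Q' x)) \<or>
            (\<exists>Q'. plot C k V Q' \<and> (\<forall>x\<in>V. Q x = hh (Q' x)))))}"

definition is_colimit :: "(nat \<Rightarrow> 'a dspace) \<Rightarrow> 'a dspace \<Rightarrow> bool" where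
  "is_colimit sk X \<longleftrightarrow>
     carrier X = (\<Union>n. carrier (sk n)) \<and>
     snd X = {(k, U, Q). Eopen k U \<and> Q \<in> U \<rightarrow>\<^sub>E carrier X \<and>
        (\<forall>r\<in>U. \<exists>V n Q'. Eopen k V \<and> r \<in> V \<and> V \<subseteq> U \<and> plot (sk n) k V Q' \<and>
            (\<forall>x\<in>V. Q x = Q' x))}"

text \<open>sk n is X^(n); the (n-1)-skeleton is prev_skel sk n, with X^(-1) empty.\<close>
definition prev_skel :: "(nat \<Rightarrow> 'a dspace) \<Rightarrow> nat \<Rightarrow> 'a dspace" where
  "prev_skel sk n = (if n = 0 then empty_dspace else sk (n - 1))"

definition cells_disk :: "(nat \<Rightarrow> 'j set) \<Rightarrow> (nat \<Rightarrow> 'j \<Rightarrow> nat) \<Rightarrow> nat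
    \<Rightarrow> ('j \<times> (nat \<Rightarrow> real) \<times> (nat \<Rightarrow> real)) dspace" where
  "cells_disk J m n = dsum (J n) (\<lambda>j. fat_disk n (m n j))"

definition cells_sphere :: "(nat \<Rightarrow> 'j set) \<Rightarrow> (nat \<Rightarrow> 'j \<Rightarrow> nat) \<Rightarrow> nat
    \<Rightarrow> ('j \<times> (nat \<Rightarrow> real) \<times> (nat \<Rightarrow> real)) dspace" where
  "cells_sphere J m n = dsum (J n) (\<lambda>j. fat_sphere n (m n j))"

definition fat_CW :: "'a dspace \<Rightarrow> (nat \<Rightarrow> 'a dspace) \<Rightarrow> (nat \<Rightarrow> 'j set) \<Rightarrow> (nat \<Rightarrow> 'j \<Rightarrow> nat)
    \<Rightarrow> (nat \<Rightarrow> 'j \<times> (nat \<Rightarrow> real) \<times> (nat \<Rightarrow> real) \<Rightarrow> 'a)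
    \<Rightarrow> (nat \<Rightarrow> 'j \<times> (nat \<Rightarrow> real) \<times> (nat \<Rightarrow> real) \<Rightarrow> 'a) \<Rightarrow> bool" where
  "fat_CW X sk J m h hh \<longleftrightarrow>
     diffeology X \<and> (\<forall>n. diffeology (sk n)) \<and>
     (\<forall>n. smooth (cells_sphere J m n) (prev_skel sk n) (h n)) \<and>
     (\<forall>n. is_pushout (cells_sphere J m n) (prev_skel sk n) (cells_disk J m n) (sk n) (h n) (hh n)) \<and>
     is_colimit sk X"

definition regular_CW :: "'a dspace \<Rightarrow> (nat \<Rightarrow> 'a dspace) \<Rightarrow> (nat \<Rightarrow> 'j set) \<Rightarrow> (nat \<Rightarrow> 'j \<Rightarrow> nat)
    \<Rightarrow> (nat \<Rightarrow> 'j \<times> (nat \<Rightarrow> real) \<times> (nat \<Rightarrow> real) \<Rightarrow> 'a)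
    \<Rightarrow> (nat \<Rightarrow> 'j \<times> (nat \<Rightarrow> real) \<times> (nat \<Rightarrow> real) \<Rightarrow> 'a) \<Rightarrow> bool" where
  "regular_CW X sk J m h hh \<longleftrightarrow> fat_CW X sk J m h hh \<and>
     (\<forall>n. induction (cells_sphere J m n) (prev_skel sk n) (h n) \<and>
          D_open (prev_skel sk n) (h n ` carrier (cells_sphere J m n)))"

end

theory Submission
  imports Defs
begin

text \<open>Off the attaching spheres the pushout leg \<open>hh\<close> is injective and misses the previous
  skeleton, so it is injective because the attaching map \<open>h\<close> is. Locally a plot of the pushout
  either factors through \<open>hh\<close> and a plot of the cells, or is a plot of the previous skeleton;
  in the second case, if it stays in the image of \<open>hh\<close>, it stays in the image of \<open>h\<close> and
  lifts to the spheres through the inverse of the induction \<open>h\<close>. The image of \<open>hh\<close> is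
  D-open by the same local case split, using that the image of \<open>h\<close> is D-open.\<close>

text \<open>Two of the axioms of a diffeology; unlike the full set of axioms they are immediate
  for the sum diffeology of the cells, and they are all the argument needs.\<close>

definition plots_in_carrier :: "'a dspace \<Rightarrow> bool" where
  "plots_in_carrier S \<longleftrightarrow> (\<forall>k U P. plot S k U P \<longrightarrow> Eopen k U \<and> P ` U \<subseteq> carrier S)"

definition plots_local :: "'a dspace \<Rightarrow> bool" where
  "plots_local S \<longleftrightarrow> (\<forall>k U P. Eopen k U \<and> P ` U \<subseteq> carrier S \<and>
     (\<forall>r\<in>U. \<exists>V. Eopen k V \<and> r \<in> V \<and> V \<subseteq> U \<and> plot S k V P) \<longrightarrow> plot S k U P)"

lemma plots_in_carrierD:
  "plots_in_carrier S \<Longrightarrow> plot S k U P \<Longrightarrow> Eopen k U \<and> P ` U \<subseteq> carrier S"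
  unfolding plots_in_carrier_def by blast

lemma plots_localD:
  "plots_local S \<Longrightarrow> Eopen k U \<Longrightarrow> P ` U \<subseteq> carrier S \<Longrightarrow>
    (\<And>r. r \<in> U \<Longrightarrow> \<exists>V. Eopen k V \<and> r \<in> V \<and> V \<subseteq> U \<and> plot S k V P) \<Longrightarrow> plot S k U P"
  unfolding plots_local_def by blast

lemma plot_cong:
  assumes "\<And>x. x \<in> U \<Longrightarrow> P x = P' x"
  shows "plot S k U P = plot S k U P'"
proof -
  have "restrict P U = restrict P' U" using assms by (intro restrict_ext) auto
  thus ?thesis unfolding plot_def by simp
qed

lemma carrier_subspace [simp]: "carrier (subspace T A) = A"
  unfolding subspace_def by simp

lemma plot_subspace: "plot (subspace T A) k U Q \<longleftrightarrow> plot T k U Q \<and> Q ` U \<subseteq> A"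
  unfolding plot_def subspace_def by auto

lemma Eopen_if_locally_Eopen:
  assumes "W \<subseteq> Esp k" and "\<And>x. x \<in> W \<Longrightarrow> \<exists>V. Eopen k V \<and> x \<in> V \<and> V \<subseteq> W"
  shows "Eopen k W"
  unfolding Eopen_def
proof (intro conjI ballI)
  fix x assume "x \<in> W"
  then obtain V where "Eopen k V" "x \<in> V" "V \<subseteq> W" using assms(2) by blast
  thus "\<exists>e>0. \<forall>y\<in>Esp k. Edist k x y < e \<longrightarrow> y \<in> W" unfolding Eopen_def by blast
qed (fact assms(1))

lemma diffeology_plots_in_carrier: "diffeology S \<Longrightarrow> plots_in_carrier S"
  unfolding diffeology_def plots_in_carrier_def plot_def by (fastforce simp: PiE_iff)

lemma plots_in_carrier_empty_dspace: "plots_in_carrier empty_dspace"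
  unfolding plots_in_carrier_def empty_dspace_def plot_def Eopen_def by auto

lemma plots_in_carrier_prev_skel:
  "(\<And>n. diffeology (sk n)) \<Longrightarrow> plots_in_carrier (prev_skel sk n)"
  unfolding prev_skel_def
  by (simp add: plots_in_carrier_empty_dspace diffeology_plots_in_carrier)

lemma induction_if_smooth_inverse:
  assumes "plots_in_carrier S" "inj_on f (carrier S)" "smooth S T f"
    and "smooth (subspace T (f ` carrier S)) S (inv_into (carrier S) f)"
  shows "induction S T f"
proof -
  have "smooth S (subspace T (f ` carrier S)) f"
    using assms(1,3) unfolding smooth_def plot_subspace by (auto dest: plots_in_carrierD)
  thus ?thesis
    using assms(2-) inj_on_imp_bij_betw unfolding induction_def diffeomorphism_def by auto
qed

lemma carrier_dsum: "carrier (dsum J S) = Sigma J (\<lambda>j. carrier (S j))"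
  unfolding dsum_def by simp

lemma plot_dsum:
  "plot (dsum J S) k U R \<longleftrightarrow> Eopen k U \<and> restrict R U \<in> U \<rightarrow>\<^sub>E Sigma J (\<lambda>j. carrier (S j)) \<and>
     (\<forall>r\<in>U. \<exists>V j Q. Eopen k V \<and> r \<in> V \<and> V \<subseteq> U \<and> j \<in> J \<and> plot (S j) k V Q \<and>
        (\<forall>x\<in>V. R x = (j, Q x)))"
proof -
  have "\<And>V Z. V \<subseteq> U \<Longrightarrow> (\<forall>x\<in>V. restrict R U x = Z x) \<longleftrightarrow> (\<forall>x\<in>V. R x = Z x)"
    and "\<And>V (A::_ \<Rightarrow> bool) B. V \<subseteq> U \<Longrightarrow>
      (\<forall>x\<in>V. (x \<in> U \<longrightarrow> A x) \<and> (x \<notin> U \<longrightarrow> B x)) \<longleftrightarrow> (\<forall>x\<in>V. A x)"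
    by auto
  thus ?thesis unfolding plot_def dsum_def by (simp cong: conj_cong)
qed

lemma plots_in_carrier_dsum: "plots_in_carrier (dsum J S)"
  unfolding plots_in_carrier_def plot_dsum carrier_dsum by (auto simp: PiE_iff)

lemma plots_local_dsum: "plots_local (dsum J S)"
  unfolding plots_local_def
proof (intro allI impI)
  fix k U R
  assume asm: "Eopen k U \<and> R ` U \<subseteq> carrier (dsum J S) \<and>
    (\<forall>r\<in>U. \<exists>V. Eopen k V \<and> r \<in> V \<and> V \<subseteq> U \<and> plot (dsum J S) k V R)"
  have "\<exists>V j Q. Eopen k V \<and> r \<in> V \<and> V \<subseteq> U \<and> j \<in> J \<and> plot (S j) k V Q \<and>
      (\<forall>x\<in>V. R x = (j, Q x))" if "r \<in> U" for r
  proof -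
    obtain V where V: "r \<in> V" "V \<subseteq> U" "plot (dsum J S) k V R" using asm \<open>r \<in> U\<close> by blast
    then obtain V' j Q where "Eopen k V'" "r \<in> V'" "V' \<subseteq> V" "j \<in> J" "plot (S j) k V' Q"
      "\<forall>x\<in>V'. R x = (j, Q x)" unfolding plot_dsum by blast
    thus ?thesis using V(2) by (meson order_trans)
  qed
  with asm show "plot (dsum J S) k U R" unfolding plot_dsum carrier_dsum by auto
qed

lemma plot_dsum_mono:
  assumes "\<And>j k V Q. j \<in> J \<Longrightarrow> plot (S j) k V Q \<Longrightarrow> plot (T j) k V Q"
    and "\<And>j. j \<in> J \<Longrightarrow> carrier (S j) \<subseteq> carrier (T j)"
    and "plot (dsum J S) k U R"
  shows "plot (dsum J T) k U R"
  using assms(3) unfolding plot_dsum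
proof (elim conjE, intro conjI ballI)
  assume R: "restrict R U \<in> U \<rightarrow>\<^sub>E Sigma J (\<lambda>j. carrier (S j))"
  have "Sigma J (\<lambda>j. carrier (S j)) \<subseteq> Sigma J (\<lambda>j. carrier (T j))"
    by (rule Sigma_mono) (simp_all add: assms(2))
  hence "U \<rightarrow>\<^sub>E Sigma J (\<lambda>j. carrier (S j)) \<subseteq> U \<rightarrow>\<^sub>E Sigma J (\<lambda>j. carrier (T j))"
    by (rule PiE_mono)
  with R show "restrict R U \<in> U \<rightarrow>\<^sub>E Sigma J (\<lambda>j. carrier (T j))" by blast
next
  fix r assume "r \<in> U" and
    "\<forall>r\<in>U. \<exists>V j Q. Eopen k V \<and> r \<in> V \<and> V \<subseteq> U \<and> j \<in> J \<and> plot (S j) k V Q \<and>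
       (\<forall>x\<in>V. R x = (j, Q x))"
  thus "\<exists>V j Q. Eopen k V \<and> r \<in> V \<and> V \<subseteq> U \<and> j \<in> J \<and> plot (T j) k V Q \<and>
       (\<forall>x\<in>V. R x = (j, Q x))" using assms(1) by meson
qed

lemma plot_cells_disk_if_plot_cells_sphere:
  assumes "carrier (cells_sphere J m n) \<subseteq> carrier (cells_disk J m n)"
    and "plot (cells_sphere J m n) k U Q"
  shows "plot (cells_disk J m n) k U Q"
proof -
  have sub: "carrier (fat_sphere n (m n j)) \<subseteq> carrier (fat_disk n (m n j))" if "j \<in> J n" for j
    using assms(1) that unfolding cells_sphere_def cells_disk_def carrier_dsum by blast
  have plot_mono: "plot (fat_disk n (m n j)) k V Q'"
    if "j \<in> J n" "plot (fat_sphere n (m n j)) k V Q'" for j k V Q'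
    using that sub[OF \<open>j \<in> J n\<close>] unfolding fat_sphere_def fat_disk_def plot_subspace by auto
  show ?thesis
    using plot_mono sub assms(2) unfolding cells_sphere_def cells_disk_def by (rule plot_dsum_mono)
qed

context
  fixes A C :: "'c dspace" and B P :: "'a dspace" and h hh :: "'c \<Rightarrow> 'a"
  assumes pushout: "is_pushout A B C P h hh"
begin

lemma pushout_carrier_subset: "carrier A \<subseteq> carrier C"
  using pushout unfolding is_pushout_def by auto

lemma pushout_leg_funcset: "hh \<in> carrier C \<rightarrow> carrier P"
  using pushout unfolding is_pushout_def by auto

lemma pushout_leg_eq: "a \<in> carrier A \<Longrightarrow> hh a = h a"
  using pushout unfolding is_pushout_def by auto

lemma pushout_leg_interior_inj:
  "c \<in> carrier C - carrier A \<Longrightarrow> c' \<in> carrier C \<Longrightarrow> hh c = hh c' \<Longrightarrow> c = c'"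
  using pushout unfolding is_pushout_def by auto

lemma pushout_leg_interior_notin_base: "c \<in> carrier C - carrier A \<Longrightarrow> hh c \<notin> carrier B"
  using pushout unfolding is_pushout_def by auto

lemma pushout_plot_iff:
  "plot P k U Q \<longleftrightarrow> Eopen k U \<and> restrict Q U \<in> U \<rightarrow>\<^sub>E carrier P \<and>
     (\<forall>r\<in>U. \<exists>V. Eopen k V \<and> r \<in> V \<and> V \<subseteq> U \<and>
        ((\<exists>Q'. plot B k V Q' \<and> (\<forall>x\<in>V. Q x = Q' x)) \<or>
         (\<exists>Q'. plot C k V Q' \<and> (\<forall>x\<in>V. Q x = hh (Q' x)))))"
proof -
  have "\<And>V Z. V \<subseteq> U \<Longrightarrow> (\<forall>x\<in>V. restrict Q U x = Z x) \<longleftrightarrow> (\<forall>x\<in>V. Q x = Z x)" by auto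
  with pushout show ?thesis unfolding is_pushout_def plot_def by (simp cong: conj_cong)
qed

lemma pushout_inj_on:
  assumes "inj_on h (carrier A)"
  shows "inj_on hh (carrier C)"
proof (rule inj_onI)
  fix c c' assume c: "c \<in> carrier C" "c' \<in> carrier C" "hh c = hh c'"
  show "c = c'"
  proof (cases "c \<in> carrier A \<and> c' \<in> carrier A")
    case True
    with c assms show ?thesis by (metis pushout_leg_eq inj_onD)
  next
    case False
    with c show ?thesis by (metis DiffI pushout_leg_interior_inj)
  qed
qed

lemma pushout_base_inter_image: "carrier B \<inter> hh ` carrier C \<subseteq> h ` carrier A"
proof
  fix y assume "y \<in> carrier B \<inter> hh ` carrier C"
  then obtain c where "c \<in> carrier C" "y = hh c" "y \<in> carrier B" by blast
  with pushout_leg_interior_notin_base have "c \<in> carrier A" by blast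
  with \<open>y = hh c\<close> show "y \<in> h ` carrier A" by (simp add: pushout_leg_eq)
qed

lemma pushout_smooth_leg:
  assumes "plots_in_carrier C"
  shows "smooth C P hh"
  unfolding smooth_def
proof (intro conjI allI impI)
  show "hh \<in> carrier C \<rightarrow> carrier P" by (fact pushout_leg_funcset)
  fix k U R assume R: "plot C k U R"
  with assms have U: "Eopen k U" and RU: "R ` U \<subseteq> carrier C" by (auto dest: plots_in_carrierD)
  show "plot P k U (hh \<circ> R)"
    unfolding pushout_plot_iff
  proof (intro conjI ballI)
    show "restrict (hh \<circ> R) U \<in> U \<rightarrow>\<^sub>E carrier P"
      using RU pushout_leg_funcset by (auto simp: restrict_PiE_iff image_subset_iff)
    show "\<exists>V. Eopen k V \<and> r \<in> V \<and> V \<subseteq> U \<and>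
        ((\<exists>Q'. plot B k V Q' \<and> (\<forall>x\<in>V. (hh \<circ> R) x = Q' x)) \<or>
         (\<exists>Q'. plot C k V Q' \<and> (\<forall>x\<in>V. (hh \<circ> R) x = hh (Q' x))))" if "r \<in> U" for r
      using U R that by (intro exI[of _ U]) auto
  qed (fact U)
qed

lemma pushout_inverse_after_base_plot:
  assumes ind: "induction A B h"
    and AC: "\<And>k U Q. plot A k U Q \<Longrightarrow> plot C k U Q"
    and B: "plots_in_carrier B"
    and Q: "plot B k V Q" "Q ` V \<subseteq> hh ` carrier C"
  shows "plot C k V (inv_into (carrier C) hh \<circ> Q)"
proof -
  have inj: "inj_on h (carrier A)"
    and inv: "smooth (subspace B (h ` carrier A)) A (inv_into (carrier A) h)"
    using ind unfolding induction_def diffeomorphism_def by auto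
  have "Q ` V \<subseteq> carrier B" using B Q(1) by (auto dest: plots_in_carrierD)
  with Q(2) have im: "Q ` V \<subseteq> h ` carrier A" using pushout_base_inter_image by blast
  with Q(1) have "plot A k V (inv_into (carrier A) h \<circ> Q)"
    using inv unfolding smooth_def plot_subspace by auto
  hence "plot C k V (inv_into (carrier A) h \<circ> Q)" by (rule AC)
  moreover have "inv_into (carrier C) hh (Q x) = inv_into (carrier A) h (Q x)" if "x \<in> V" for x
  proof -
    obtain a where a: "a \<in> carrier A" "Q x = h a" using im \<open>x \<in> V\<close> by blast
    with pushout_carrier_subset pushout_inj_on[OF inj] inj show ?thesis
      by (metis pushout_leg_eq inv_into_f_f subsetD)
  qed
  ultimately show ?thesis by (subst plot_cong) auto
qed

lemma pushout_smooth_inverse: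
  assumes ind: "induction A B h"
    and AC: "\<And>k U Q. plot A k U Q \<Longrightarrow> plot C k U Q"
    and B: "plots_in_carrier B" and C: "plots_in_carrier C" "plots_local C"
  shows "smooth (subspace P (hh ` carrier C)) C (inv_into (carrier C) hh)"
  unfolding smooth_def carrier_subspace
proof (intro conjI allI impI)
  show "inv_into (carrier C) hh \<in> hh ` carrier C \<rightarrow> carrier C" by (auto intro: inv_into_into)
  have inj: "inj_on hh (carrier C)"
    using ind pushout_inj_on unfolding induction_def by blast
  fix k U Q assume "plot (subspace P (hh ` carrier C)) k U Q"
  hence Q: "plot P k U Q" and QU: "Q ` U \<subseteq> hh ` carrier C" unfolding plot_subspace by auto
  show "plot C k U (inv_into (carrier C) hh \<circ> Q)"
  proof (rule plots_localD[OF C(2)])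
    show "Eopen k U" using Q unfolding pushout_plot_iff by blast
    show "(inv_into (carrier C) hh \<circ> Q) ` U \<subseteq> carrier C"
      using QU by (auto simp: image_subset_iff intro!: inv_into_into)
    fix r assume "r \<in> U"
    then obtain V where V: "Eopen k V" "r \<in> V" "V \<subseteq> U" and
      pieces: "(\<exists>Q'. plot B k V Q' \<and> (\<forall>x\<in>V. Q x = Q' x)) \<or>
               (\<exists>Q'. plot C k V Q' \<and> (\<forall>x\<in>V. Q x = hh (Q' x)))"
      using Q unfolding pushout_plot_iff by blast
    have "plot C k V (inv_into (carrier C) hh \<circ> Q)"
      using pieces
    proof (elim disjE exE conjE)
      fix Q' assume Q': "plot B k V Q'" "\<forall>x\<in>V. Q x = Q' x"
      with QU V(3) have "Q' ` V \<subseteq> hh ` carrier C" by force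
      with Q'(1) have "plot C k V (inv_into (carrier C) hh \<circ> Q')"
        using pushout_inverse_after_base_plot[OF ind AC B] by blast
      with Q'(2) show ?thesis by (subst plot_cong) auto
    next
      fix Q' assume Q': "plot C k V Q'" "\<forall>x\<in>V. Q x = hh (Q' x)"
      with C(1) have "Q' ` V \<subseteq> carrier C" by (auto dest: plots_in_carrierD)
      with Q' inj show ?thesis by (subst plot_cong[where P' = Q']) auto
    qed
    with V show "\<exists>V. Eopen k V \<and> r \<in> V \<and> V \<subseteq> U \<and> plot C k V (inv_into (carrier C) hh \<circ> Q)"
      by blast
  qed
qed

lemma pushout_D_open_image:
  assumes dop: "D_open B (h ` carrier A)"
    and B: "plots_in_carrier B" and C: "plots_in_carrier C"
  shows "D_open P (hh ` carrier C)"
  unfolding D_open_def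
proof (intro conjI allI impI)
  show "hh ` carrier C \<subseteq> carrier P" using pushout_leg_funcset by blast
  fix k U Q assume "plot P k U Q"
  note Q = this[unfolded pushout_plot_iff]
  let ?W = "{x \<in> U. Q x \<in> hh ` carrier C}"
  show "Eopen k ?W"
  proof (rule Eopen_if_locally_Eopen)
    show "?W \<subseteq> Esp k" using Q unfolding Eopen_def by auto
    fix x assume x: "x \<in> ?W"
    then obtain V where V: "Eopen k V" "x \<in> V" "V \<subseteq> U" and
      pieces: "(\<exists>Q'. plot B k V Q' \<and> (\<forall>x\<in>V. Q x = Q' x)) \<or>
               (\<exists>Q'. plot C k V Q' \<and> (\<forall>x\<in>V. Q x = hh (Q' x)))"
      using Q by blast
    from pieces show "\<exists>V. Eopen k V \<and> x \<in> V \<and> V \<subseteq> ?W"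
    proof (elim disjE exE conjE)
      fix Q' assume Q': "plot B k V Q'" "\<forall>x\<in>V. Q x = Q' x"
      let ?V' = "{y \<in> V. Q' y \<in> h ` carrier A}"
      have "Eopen k ?V'" using dop Q'(1) unfolding D_open_def by blast
      moreover have "Q' x \<in> carrier B" using B Q'(1) V(2) by (auto dest: plots_in_carrierD)
      with x V Q'(2) have "x \<in> ?V'" using pushout_base_inter_image by auto
      moreover have "?V' \<subseteq> ?W"
        using V(3) Q'(2) pushout_leg_eq pushout_carrier_subset by force
      ultimately show ?thesis by blast
    next
      fix Q' assume Q': "plot C k V Q'" "\<forall>x\<in>V. Q x = hh (Q' x)"
      with C have "Q' ` V \<subseteq> carrier C" by (auto dest: plots_in_carrierD)
      with V Q'(2) show ?thesis by blast
    qed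
  qed
qed

lemma pushout_induction_leg:
  assumes "induction A B h"
    and "\<And>k U Q. plot A k U Q \<Longrightarrow> plot C k U Q"
    and "plots_in_carrier B" "plots_in_carrier C" "plots_local C"
  shows "induction C P hh"
  using assms pushout_inj_on pushout_smooth_leg pushout_smooth_inverse
  by (intro induction_if_smooth_inverse) (auto simp: induction_def)

end

theorem proposition7p2:
  fixes X :: "'a dspace" and sk :: "nat \<Rightarrow> 'a dspace"
    and J :: "nat \<Rightarrow> 'j set" and m :: "nat \<Rightarrow> 'j \<Rightarrow> nat"
    and h hh :: "nat \<Rightarrow> 'j \<times> (nat \<Rightarrow> real) \<times> (nat \<Rightarrow> real) \<Rightarrow> 'a"
  assumes "regular_CW X sk J m h hh"
  shows "\<forall>n. induction (cells_disk J m n) (sk n) (hh n) \<and>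
             D_open (sk n) (hh n ` carrier (cells_disk J m n))"
proof
  fix n
  have po: "is_pushout (cells_sphere J m n) (prev_skel sk n) (cells_disk J m n) (sk n) (h n) (hh n)"
    and ind: "induction (cells_sphere J m n) (prev_skel sk n) (h n)"
    and open_image: "D_open (prev_skel sk n) (h n ` carrier (cells_sphere J m n))"
    and skeleta: "\<And>n. diffeology (sk n)"
    using assms unfolding regular_CW_def fat_CW_def by auto
  from skeleta have prev_plots: "plots_in_carrier (prev_skel sk n)" by (rule plots_in_carrier_prev_skel)
  have cell_plots: "plots_in_carrier (cells_disk J m n)" "plots_local (cells_disk J m n)"
    unfolding cells_disk_def by (rule plots_in_carrier_dsum plots_local_dsum)+
  from po have "\<And>k U Q. plot (cells_sphere J m n) k U Q \<Longrightarrow> plot (cells_disk J m n) k U Q"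
    by (intro plot_cells_disk_if_plot_cells_sphere pushout_carrier_subset)
  with po ind open_image prev_plots cell_plots show "induction (cells_disk J m n) (sk n) (hh n) \<and>
      D_open (sk n) (hh n ` carrier (cells_disk J m n))"
    by (blast intro: pushout_induction_leg pushout_D_open_image)
qed

end
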